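(* Let $S$ be a semidomain. The following are equivalent: (a) $S$ is a BFS; (b) $S[x]$ is a BFS; (c) $S[x^{\pm1}]$ is a BFS.
   Context: A semidomain is a subset $S$ of an integral domain $R$ containing $0$ and $1$ and closed under addition and multiplication; $S^*=S\setminus\{0\}$ is a monoid under multiplication, with units forming $S^\times$. An atom is a nonunit $a\in S^*$ such that $a=bc$ with $b,c\in S^*$ forces $b$ or $c$ to be a unit; $S$ is atomic if every nonunit of $S^*$ is a finite product of atoms. $S$ is a bounded factorization semidomain (BFS) if $S$ is atomic and, for each nonunit $b\in S^*$, the set of lengths $\{\ell : b=a_1\cdots a_\ell \text{ with } a_i \text{ atoms}\}$ is finite. $S[x]$ (resp. $S[x^{\pm1}]$) is the semidomain of polynomials (resp. Laurent polynomials) in $R[x]$ (resp. $R[x^{\pm1}]$) with coefficients in $S$. *)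

theory Defs
  imports "HOL-Computational_Algebra.Polynomial" "HOL-Computational_Algebra.Formal_Laurent_Series"
begin

definition semidomain :: "'a::idom set \<Rightarrow> bool" where
  "semidomain S \<longleftrightarrow> 0 \<in> S \<and> 1 \<in> S \<and> (\<forall>a\<in>S. \<forall>b\<in>S. a + b \<in> S \<and> a * b \<in> S)"

definition sunit :: "'a::idom set \<Rightarrow> 'a \<Rightarrow> bool" where
  "sunit S u \<longleftrightarrow> u \<in> S \<and> u \<noteq> 0 \<and> (\<exists>v\<in>S. v \<noteq> 0 \<and> u * v = 1)"

definition satom :: "'a::idom set \<Rightarrow> 'a \<Rightarrow> bool" where
  "satom S a \<longleftrightarrow> a \<in> S \<and> a \<noteq> 0 \<and> \<not> sunit S a \<and>
     (\<forall>b\<in>S - {0}. \<forall>c\<in>S - {0}. a = b * c \<longrightarrow> sunit S b \<or> sunit S c)"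

definition slengths :: "'a::idom set \<Rightarrow> 'a \<Rightarrow> nat set" where
  "slengths S b = {length as | as. (\<forall>a\<in>set as. satom S a) \<and> prod_list as = b}"

definition satomic :: "'a::idom set \<Rightarrow> bool" where
  "satomic S \<longleftrightarrow> (\<forall>b\<in>S - {0}. \<not> sunit S b \<longrightarrow> slengths S b \<noteq> {})"

definition BFS :: "'a::idom set \<Rightarrow> bool" where
  "BFS S \<longleftrightarrow> satomic S \<and> (\<forall>b\<in>S - {0}. \<not> sunit S b \<longrightarrow> finite (slengths S b))"

definition poly_semidomain :: "'a::idom set \<Rightarrow> 'a poly set" where
  "poly_semidomain S = {p. \<forall>i. coeff p i \<in> S}"

text \<open>S[x^{+-1}]: Laurent polynomials (Laurent series with finitely many nonzero
  coefficients) over the ambient domain with all coefficients in S.\<close>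
definition laurent_semidomain :: "'a::idom set \<Rightarrow> 'a fls set" where
  "laurent_semidomain S = {f. finite {n. fls_nth f n \<noteq> 0} \<and> (\<forall>n. fls_nth f n \<in> S)}"

end

theory Submission
  imports Defs
begin

text \<open>A semidomain \<open>T\<close> is a BFS iff for every nonzero \<open>b \<in> T\<close> the number of nonunit factors
  in a factorization of \<open>b\<close> into arbitrary elements of \<open>T\<close> is bounded: refining such a
  factorization into atoms only increases that number, and conversely a factorization into
  nonunits of maximal length consists of atoms. This bound transfers along multiplicative maps
  that reflect units, so it passes from \<open>S[x]\<close> and \<open>S[x\<^sup>\<plusminus>\<^sup>1]\<close> to \<open>S\<close> via constants, and from
  \<open>S[x]\<close> to \<open>S[x\<^sup>\<plusminus>\<^sup>1]\<close> via the base polynomial \<open>x\<^sup>-\<^sup>k g\<close> of a Laurent polynomial \<open>g\<close> of order \<open>k\<close>.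
  Finally, in \<open>S[x]\<close> a nonunit factor of \<open>p\<close> is nonconstant or has a nonunit leading
  coefficient, so their number is at most \<open>deg p\<close> plus the bound for the leading coefficient
  of \<open>p\<close> in \<open>S\<close>.\<close>

unbundle fps_syntax

lemma length_filter_mono:
  "(\<And>x. x \<in> set xs \<Longrightarrow> P x \<Longrightarrow> Q x) \<Longrightarrow> length (filter P xs) \<le> length (filter Q xs)"
  by (induction xs) auto

lemma length_filter_disj_le:
  "length (filter (\<lambda>x. P x \<or> Q x) xs) \<le> length (filter P xs) + length (filter Q xs)"
  by (induction xs) auto

lemma length_filter_nonzero_le_sum_list:
  "length (filter (\<lambda>x. f x \<noteq> (0::nat)) xs) \<le> sum_list (map f xs)"
  by (induction xs) auto

lemma semidomain_zero: "semidomain T \<Longrightarrow> 0 \<in> T"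
  and semidomain_one: "semidomain T \<Longrightarrow> 1 \<in> T"
  and semidomain_add: "semidomain T \<Longrightarrow> a \<in> T \<Longrightarrow> b \<in> T \<Longrightarrow> a + b \<in> T"
  and semidomain_mult: "semidomain T \<Longrightarrow> a \<in> T \<Longrightarrow> b \<in> T \<Longrightarrow> a * b \<in> T"
  by (simp_all add: semidomain_def)

lemma semidomain_prod_list: "semidomain T \<Longrightarrow> set xs \<subseteq> T \<Longrightarrow> prod_list xs \<in> T"
  by (induction xs) (auto simp: semidomain_one semidomain_mult)

lemma semidomain_sum: "semidomain T \<Longrightarrow> (\<And>i. i \<in> A \<Longrightarrow> f i \<in> T) \<Longrightarrow> sum f A \<in> T"
  by (induction A rule: infinite_finite_induct) (auto simp: semidomain_zero semidomain_add)

lemma sunit_one: "semidomain T \<Longrightarrow> sunit T 1"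
  unfolding sunit_def using semidomain_one by fastforce

lemma sunit_mult:
  assumes "semidomain T" "sunit T a" "sunit T b"
  shows "sunit T (a * b)"
proof -
  from assms obtain v w where "v \<in> T" "w \<in> T" "a \<in> T" "b \<in> T" "a * v = 1" "b * w = 1"
    unfolding sunit_def by auto
  moreover have "(a * b) * (v * w) = (a * v) * (b * w)"
    by (simp add: ac_simps)
  ultimately have "(a * b) * (v * w) = 1" "a * b \<in> T" "v * w \<in> T"
    using assms(1) by (auto simp: semidomain_mult)
  then show ?thesis
    unfolding sunit_def by (metis mult_not_zero zero_neq_one)
qed

lemma sunit_multD:
  assumes "semidomain T" "a \<in> T" "b \<in> T" "sunit T (a * b)"
  shows "sunit T a"
proof -
  from assms(4) obtain v where "v \<in> T" "a * (b * v) = 1"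
    unfolding sunit_def by (auto simp: mult.assoc)
  moreover have "b * v \<in> T"
    using assms(1,3) \<open>v \<in> T\<close> by (rule semidomain_mult)
  ultimately show ?thesis
    using assms(2) unfolding sunit_def by (metis mult_not_zero zero_neq_one)
qed

lemma sunit_prod_listD:
  assumes "semidomain T" "set xs \<subseteq> T" "sunit T (prod_list xs)" "x \<in> set xs"
  shows "sunit T x"
proof -
  obtain ys zs where xs: "xs = ys @ x # zs"
    using split_list assms(4) by metis
  have "prod_list xs = x * prod_list (ys @ zs)"
    unfolding xs by (simp add: algebra_simps)
  moreover have "prod_list (ys @ zs) \<in> T"
    using assms(1,2) xs by (intro semidomain_prod_list) auto
  ultimately show ?thesis
    using sunit_multD[OF assms(1)] assms(2-4) by auto
qed

lemma satom_unit_mult: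
  assumes T: "semidomain T" and "sunit T u" "satom T a"
  shows "satom T (u * a)"
proof -
  obtain v where v: "v \<in> T" "v * u = 1" and u: "u \<in> T" "u \<noteq> 0"
    using \<open>sunit T u\<close> unfolding sunit_def by (auto simp: mult.commute)
  have a: "a \<in> T" "a \<noteq> 0" "\<not> sunit T a"
    using \<open>satom T a\<close> unfolding satom_def by auto
  have "\<not> sunit T (u * a)"
    using sunit_multD[OF T a(1) u(1)] a(3) by (auto simp: mult.commute)
  moreover have "sunit T b \<or> sunit T c"
    if "b \<in> T - {0}" "c \<in> T - {0}" "u * a = b * c" for b c
  proof -
    have "a = (v * b) * c"
      using that(3) v(2) by (metis mult.assoc mult_1)
    moreover have "v * b \<in> T - {0}"
      using that(1) v T by (auto simp: semidomain_mult)
    ultimately have "sunit T (v * b) \<or> sunit T c"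
      using \<open>satom T a\<close> that(2) unfolding satom_def by blast
    then show ?thesis
      using sunit_multD[OF T, of b v] that(1) v(1) by (auto simp: mult.commute)
  qed
  ultimately show ?thesis
    using u a T unfolding satom_def by (auto simp: semidomain_mult)
qed

definition nonunit_factors_bounded :: "'a::idom set \<Rightarrow> bool" where
  "nonunit_factors_bounded T \<longleftrightarrow> (\<forall>b\<in>T - {0}. \<exists>N. \<forall>xs. set xs \<subseteq> T \<longrightarrow> prod_list xs = b \<longrightarrow>
      length (filter (\<lambda>x. \<not> sunit T x) xs) \<le> N)"

lemma satomic_refine_factorization:
  assumes T: "semidomain T" and "satomic T" and "set xs \<subseteq> T - {0}"
  shows "\<exists>u as. sunit T u \<and> (\<forall>a\<in>set as. satom T a) \<and> prod_list xs = u * prod_list as \<and>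
    length (filter (\<lambda>x. \<not> sunit T x) xs) \<le> length as"
  using assms(3)
proof (induction xs)
  case Nil
  then show ?case
    using sunit_one[OF T] by (intro exI[of _ 1] exI[of _ "[]"]) auto
next
  case (Cons x xs)
  then obtain u as where IH: "sunit T u" "\<forall>a\<in>set as. satom T a" "prod_list xs = u * prod_list as"
    "length (filter (\<lambda>x. \<not> sunit T x) xs) \<le> length as"
    by auto
  show ?case
  proof (cases "sunit T x")
    case True
    then show ?thesis
      using IH sunit_mult[OF T True IH(1)] by (intro exI[of _ "x * u"] exI[of _ as]) (auto simp: mult.assoc)
  next
    case False
    with Cons.prems \<open>satomic T\<close> obtain bs where bs: "\<forall>a\<in>set bs. satom T a" "prod_list bs = x"
      unfolding satomic_def slengths_def by auto
    with False sunit_one[OF T] obtain b bs' where "bs = b # bs'"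
      by (cases bs) auto
    show ?thesis
    proof (intro exI[of _ u] exI[of _ "bs @ as"] conjI)
      show "prod_list (x # xs) = u * prod_list (bs @ as)"
        using IH(3) bs(2) by (simp add: ac_simps)
      show "length (filter (\<lambda>x. \<not> sunit T x) (x # xs)) \<le> length (bs @ as)"
        using IH(4) False \<open>bs = b # bs'\<close> by simp
    qed (use IH bs in auto)
  qed
qed

lemma BFS_imp_nonunit_factors_bounded:
  assumes T: "semidomain T" and "BFS T"
  shows "nonunit_factors_bounded T"
  unfolding nonunit_factors_bounded_def
proof
  fix b assume b: "b \<in> T - {0}"
  show "\<exists>N. \<forall>xs. set xs \<subseteq> T \<longrightarrow> prod_list xs = b \<longrightarrow> length (filter (\<lambda>x. \<not> sunit T x) xs) \<le> N"
  proof (cases "sunit T b")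
    case True
    then show ?thesis
      using sunit_prod_listD[OF T] by (intro exI[of _ 0]) (auto simp: filter_empty_conv)
  next
    case False
    show ?thesis
    proof (intro exI[of _ "Max (slengths T b)"] allI impI)
      fix xs assume xs: "set xs \<subseteq> T" "prod_list xs = b"
      with b have "set xs \<subseteq> T - {0}"
        by (auto simp: prod_list_zero_iff)
      with \<open>BFS T\<close> obtain u as where ua: "sunit T u" "\<forall>a\<in>set as. satom T a" "b = u * prod_list as"
        "length (filter (\<lambda>x. \<not> sunit T x) xs) \<le> length as"
        using satomic_refine_factorization[OF T] xs unfolding BFS_def by metis
      with False T obtain a as' where as: "as = a # as'"
        by (cases as) auto
      \<comment> \<open>absorb the unit into the first atom\<close>
      have "(\<forall>x\<in>set ((u * a) # as'). satom T x) \<and> prod_list ((u * a) # as') = b"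
        using ua as satom_unit_mult[OF T ua(1)] by (auto simp: mult.assoc)
      then have "length ((u * a) # as') \<in> slengths T b"
        unfolding slengths_def by blast
      moreover have "finite (slengths T b)"
        using \<open>BFS T\<close> b False unfolding BFS_def by auto
      ultimately have "length ((u * a) # as') \<le> Max (slengths T b)"
        by (rule Max_ge[rotated])
      then show "length (filter (\<lambda>x. \<not> sunit T x) xs) \<le> Max (slengths T b)"
        using ua(4) as by simp
    qed
  qed
qed

lemma nonunit_factors_bounded_imp_finite_slengths:
  assumes "nonunit_factors_bounded T" "b \<in> T" "b \<noteq> 0"
  shows "finite (slengths T b)"
proof -
  obtain N where N: "\<And>xs. set xs \<subseteq> T \<Longrightarrow> prod_list xs = b \<Longrightarrow> length (filter (\<lambda>x. \<not> sunit T x) xs) \<le> N"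
    using assms unfolding nonunit_factors_bounded_def by blast
  have "slengths T b \<subseteq> {..N}"
  proof
    fix l assume "l \<in> slengths T b"
    then obtain as where "\<forall>a\<in>set as. satom T a" "prod_list as = b" "l = length as"
      unfolding slengths_def by auto
    moreover from this have "set as \<subseteq> T" "filter (\<lambda>x. \<not> sunit T x) as = as"
      unfolding satom_def by auto
    ultimately show "l \<in> {..N}"
      using N by (metis atMost_iff)
  qed
  then show ?thesis
    using finite_subset by blast
qed

lemma nonunit_factors_bounded_imp_slengths_nonempty:
  assumes "nonunit_factors_bounded T" "b \<in> T" "b \<noteq> 0" "\<not> sunit T b"
  shows "slengths T b \<noteq> {}"
proof -
  obtain N where N: "\<And>xs. set xs \<subseteq> T \<Longrightarrow> prod_list xs = b \<Longrightarrow> length (filter (\<lambda>x. \<not> sunit T x) xs) \<le> N"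
    using assms unfolding nonunit_factors_bounded_def by blast
  define P where "P xs \<longleftrightarrow> set xs \<subseteq> T \<and> (\<forall>x\<in>set xs. \<not> sunit T x) \<and> prod_list xs = b" for xs
  have "P [b]"
    using assms unfolding P_def by auto
  moreover have "length ys < Suc N" if "P ys" for ys
    using N[of ys] that unfolding P_def by (simp add: filter_id_conv)
  ultimately obtain xs where xs: "P xs" "\<And>ys. P ys \<Longrightarrow> length ys \<le> length xs"
    using ex_has_greatest_nat[of P "[b]" length "Suc N"] by blast
  have "satom T x" if x: "x \<in> set xs" for x
  proof -
    obtain ys zs where split: "xs = ys @ x # zs"
      using split_list x by metis
    have "sunit T c \<or> sunit T d" if "c \<in> T - {0}" "d \<in> T - {0}" "x = c * d" for c d
    proof (rule ccontr)
      assume "\<not> (sunit T c \<or> sunit T d)"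
      with that xs(1) have "P (ys @ c # d # zs)"
        unfolding P_def split by (auto simp: algebra_simps)
      then show False
        using xs(2) unfolding split by fastforce
    qed
    moreover have "x \<noteq> 0"
      using xs(1) x assms(3) unfolding P_def by (auto simp: prod_list_zero_iff)
    ultimately show ?thesis
      using xs(1) x unfolding P_def satom_def by blast
  qed
  then have "length xs \<in> slengths T b"
    using xs(1) unfolding slengths_def P_def by auto
  then show ?thesis
    by auto
qed

lemma BFS_iff_nonunit_factors_bounded:
  "semidomain T \<Longrightarrow> BFS T \<longleftrightarrow> nonunit_factors_bounded T"
  using BFS_imp_nonunit_factors_bounded nonunit_factors_bounded_imp_finite_slengths
    nonunit_factors_bounded_imp_slengths_nonempty
  unfolding BFS_def satomic_def by blast

lemma prod_list_map_mult_hom: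
  assumes T: "semidomain T" and "set xs \<subseteq> T" and "\<phi> 1 = 1"
    and "\<And>x y. x \<in> T \<Longrightarrow> y \<in> T \<Longrightarrow> \<phi> (x * y) = \<phi> x * \<phi> y"
  shows "\<phi> (prod_list xs) = prod_list (map \<phi> xs)"
  using assms(2) by (induction xs) (auto simp: assms(3,4) semidomain_prod_list[OF T])

lemma nonunit_factors_bounded_pullback:
  assumes T: "semidomain T" and bounded: "nonunit_factors_bounded T'"
    and maps: "\<And>x. x \<in> T \<Longrightarrow> \<phi> x \<in> T'"
    and nonzero: "\<And>x. x \<in> T \<Longrightarrow> x \<noteq> 0 \<Longrightarrow> \<phi> x \<noteq> 0"
    and one: "\<phi> 1 = 1" and mult: "\<And>x y. x \<in> T \<Longrightarrow> y \<in> T \<Longrightarrow> \<phi> (x * y) = \<phi> x * \<phi> y"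
    and reflects_units: "\<And>x. x \<in> T \<Longrightarrow> x \<noteq> 0 \<Longrightarrow> sunit T' (\<phi> x) \<Longrightarrow> sunit T x"
  shows "nonunit_factors_bounded T"
  unfolding nonunit_factors_bounded_def
proof
  fix b assume b: "b \<in> T - {0}"
  then obtain N where N: "\<And>ys. set ys \<subseteq> T' \<Longrightarrow> prod_list ys = \<phi> b \<Longrightarrow>
      length (filter (\<lambda>y. \<not> sunit T' y) ys) \<le> N"
    using bounded maps nonzero unfolding nonunit_factors_bounded_def by blast
  show "\<exists>N. \<forall>xs. set xs \<subseteq> T \<longrightarrow> prod_list xs = b \<longrightarrow> length (filter (\<lambda>x. \<not> sunit T x) xs) \<le> N"
  proof (intro exI[of _ N] allI impI)
    fix xs assume xs: "set xs \<subseteq> T" "prod_list xs = b"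
    then have "0 \<notin> set xs"
      using b by (auto simp: prod_list_zero_iff)
    then have "length (filter (\<lambda>x. \<not> sunit T x) xs) \<le> length (filter (\<lambda>x. \<not> sunit T' (\<phi> x)) xs)"
      using xs(1) reflects_units by (intro length_filter_mono) blast
    also have "\<dots> \<le> N"
    proof -
      have "set (map \<phi> xs) \<subseteq> T'"
        using xs(1) maps by auto
      moreover have "prod_list (map \<phi> xs) = \<phi> b"
        using prod_list_map_mult_hom[of T xs \<phi>, OF T xs(1) one mult] xs(2) by simp
      ultimately have "length (filter (\<lambda>y. \<not> sunit T' y) (map \<phi> xs)) \<le> N"
        by (rule N)
      then show ?thesis
        by (simp add: filter_map o_def)
    qed
    finally show "length (filter (\<lambda>x. \<not> sunit T x) xs) \<le> N" .
  qed
qed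

lemma degree_prod_list_eq:
  "0 \<notin> set ps \<Longrightarrow> degree (prod_list ps) = sum_list (map degree (ps :: 'a::idom poly list))"
  by (induction ps) (auto simp: degree_mult_eq prod_list_zero_iff)

lemma lead_coeff_prod_list:
  "lead_coeff (prod_list ps) = prod_list (map lead_coeff (ps :: 'a::idom poly list))"
  by (induction ps) (auto simp: lead_coeff_mult)

lemma semidomain_poly_semidomain:
  assumes S: "semidomain S"
  shows "semidomain (poly_semidomain S)"
proof -
  have "p + q \<in> poly_semidomain S \<and> p * q \<in> poly_semidomain S"
    if "p \<in> poly_semidomain S" "q \<in> poly_semidomain S" for p q
    using that semidomain_add[OF S] semidomain_mult[OF S] unfolding poly_semidomain_def
    by (auto simp: coeff_mult intro!: semidomain_sum[OF S])
  then show ?thesis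
    using S unfolding semidomain_def poly_semidomain_def by (auto simp: coeff_1)
qed

lemma const_poly_in_poly_semidomain: "semidomain S \<Longrightarrow> c \<in> S \<Longrightarrow> [:c:] \<in> poly_semidomain S"
  unfolding poly_semidomain_def by (auto simp: coeff_pCons semidomain_zero split: nat.split)

lemma sunit_poly_semidomain_iff:
  assumes S: "semidomain S" and p: "p \<in> poly_semidomain S"
  shows "sunit (poly_semidomain S) p \<longleftrightarrow> degree p = 0 \<and> sunit S (coeff p 0)"
proof
  assume "sunit (poly_semidomain S) p"
  then obtain q where q: "q \<in> poly_semidomain S" "q \<noteq> 0" "p \<noteq> 0" "p * q = 1"
    unfolding sunit_def by auto
  then have "degree p = 0"
    using degree_mult_eq[OF q(3,2)] by simp
  moreover have "coeff p 0 * coeff q 0 = 1"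
    using arg_cong[OF q(4), of "\<lambda>r. coeff r 0"] by (simp add: coeff_mult_0)
  moreover have "coeff p 0 \<in> S" "coeff q 0 \<in> S"
    using p q(1) unfolding poly_semidomain_def by auto
  ultimately show "degree p = 0 \<and> sunit S (coeff p 0)"
    unfolding sunit_def by (auto intro!: bexI[of _ "coeff q 0"])
next
  assume unit: "degree p = 0 \<and> sunit S (coeff p 0)"
  then obtain v where v: "v \<in> S" "v \<noteq> 0" "coeff p 0 * v = 1"
    unfolding sunit_def by auto
  obtain c where "p = [:c:]"
    using unit degree_0_id by metis
  with v(3) have "p * [:v:] = 1"
    by (simp add: mult.commute[of v])
  moreover from this have "p \<noteq> 0"
    by auto
  moreover have "[:v:] \<noteq> 0"
    using v(2) by simp
  ultimately show "sunit (poly_semidomain S) p"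
    using p const_poly_in_poly_semidomain[OF S v(1)] unfolding sunit_def by blast
qed

lemma nonunit_factors_bounded_poly_semidomain:
  assumes S: "semidomain S" and bounded: "nonunit_factors_bounded S"
  shows "nonunit_factors_bounded (poly_semidomain S)"
  unfolding nonunit_factors_bounded_def
proof
  fix p assume p: "p \<in> poly_semidomain S - {0}"
  then have "lead_coeff p \<in> S - {0}"
    unfolding poly_semidomain_def by auto
  then obtain N where N: "\<And>xs. set xs \<subseteq> S \<Longrightarrow> prod_list xs = lead_coeff p \<Longrightarrow>
      length (filter (\<lambda>x. \<not> sunit S x) xs) \<le> N"
    using bounded unfolding nonunit_factors_bounded_def by blast
  show "\<exists>N. \<forall>qs. set qs \<subseteq> poly_semidomain S \<longrightarrow> prod_list qs = p \<longrightarrow>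
      length (filter (\<lambda>q. \<not> sunit (poly_semidomain S) q) qs) \<le> N"
  proof (intro exI[of _ "degree p + N"] allI impI)
    fix qs assume qs: "set qs \<subseteq> poly_semidomain S" "prod_list qs = p"
    then have "0 \<notin> set qs"
      using p by (auto simp: prod_list_zero_iff)
    have "length (filter (\<lambda>q. \<not> sunit (poly_semidomain S) q) qs) \<le>
        length (filter (\<lambda>q. degree q \<noteq> 0 \<or> \<not> sunit S (lead_coeff q)) qs)"
      using qs(1) sunit_poly_semidomain_iff[OF S] by (intro length_filter_mono) auto
    also have "\<dots> \<le> length (filter (\<lambda>q. degree q \<noteq> 0) qs) +
        length (filter (\<lambda>q. \<not> sunit S (lead_coeff q)) qs)"
      by (rule length_filter_disj_le)
    also have "length (filter (\<lambda>q. degree q \<noteq> 0) qs) \<le> degree p"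
      using length_filter_nonzero_le_sum_list[of degree qs] degree_prod_list_eq[OF \<open>0 \<notin> set qs\<close>] qs(2)
      by simp
    also have "length (filter (\<lambda>q. \<not> sunit S (lead_coeff q)) qs) \<le> N"
    proof -
      have "set (map lead_coeff qs) \<subseteq> S"
        using qs(1) unfolding poly_semidomain_def by auto
      moreover have "prod_list (map lead_coeff qs) = lead_coeff p"
        using qs(2) lead_coeff_prod_list by metis
      ultimately have "length (filter (\<lambda>x. \<not> sunit S x) (map lead_coeff qs)) \<le> N"
        by (rule N)
      then show ?thesis
        by (simp add: filter_map o_def)
    qed
    finally show "length (filter (\<lambda>q. \<not> sunit (poly_semidomain S) q) qs) \<le> degree p + N"
      by simp
  qed
qed

lemma BFS_iff_BFS_poly_semidomain:
  assumes S: "semidomain S"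
  shows "BFS S \<longleftrightarrow> BFS (poly_semidomain S)"
proof -
  have "nonunit_factors_bounded S" if "nonunit_factors_bounded (poly_semidomain S)"
  proof (rule nonunit_factors_bounded_pullback[where \<phi> = "\<lambda>c. [:c:]", OF S that])
    show "[:c:] \<in> poly_semidomain S" if "c \<in> S" for c
      using const_poly_in_poly_semidomain[OF S that] .
    show "sunit S c" if "c \<in> S" "sunit (poly_semidomain S) [:c:]" for c
      using that sunit_poly_semidomain_iff[OF S const_poly_in_poly_semidomain[OF S that(1)]] by simp
  qed simp_all
  then show ?thesis
    using BFS_iff_nonunit_factors_bounded[OF S] nonunit_factors_bounded_poly_semidomain[OF S]
      BFS_iff_nonunit_factors_bounded[OF semidomain_poly_semidomain[OF S]] by blast
qed

lemma fls_finite_support_iff_bounded: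
  fixes f :: "'a::zero fls"
  shows "finite {n. f $$ n \<noteq> 0} \<longleftrightarrow> (\<exists>A. \<forall>n>A. f $$ n = 0)"
proof
  assume fin: "finite {n. f $$ n \<noteq> 0}"
  have "n \<le> Max (insert 0 {n. f $$ n \<noteq> 0})" if "f $$ n \<noteq> 0" for n
    using fin that by simp
  then show "\<exists>A. \<forall>n>A. f $$ n = 0"
    by (meson not_le)
next
  assume "\<exists>A. \<forall>n>A. f $$ n = 0"
  then obtain A where "\<forall>n>A. f $$ n = 0"
    by blast
  then have "{n. f $$ n \<noteq> 0} \<subseteq> {fls_subdegree f..A}"
    by (auto simp: not_less[symmetric])
  then show "finite {n. f $$ n \<noteq> 0}"
    using finite_subset by blast
qed

lemma fls_times_nth_eq_0_above:
  fixes f g :: "'a::semiring_0 fls"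
  assumes "\<forall>n>A. f $$ n = 0" "\<forall>n>B. g $$ n = 0" "A + B < n"
  shows "(f * g) $$ n = 0"
proof -
  have "f $$ i * g $$ (n - i) = 0" for i
    using assms by (cases "A < i") auto
  then show ?thesis
    unfolding fls_times_nth(2) by simp
qed

lemma fls_finite_support_mult:
  fixes f g :: "'a::semiring_0 fls"
  assumes "finite {n. f $$ n \<noteq> 0}" "finite {n. g $$ n \<noteq> 0}"
  shows "finite {n. (f * g) $$ n \<noteq> 0}"
proof -
  obtain A B where "\<forall>n>A. f $$ n = 0" "\<forall>n>B. g $$ n = 0"
    using assms fls_finite_support_iff_bounded by metis
  then have "\<forall>n>A + B. (f * g) $$ n = 0"
    using fls_times_nth_eq_0_above by blast
  then show ?thesis
    using fls_finite_support_iff_bounded by blast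
qed

lemma fls_shift_const_in_laurent_semidomain:
  "semidomain S \<Longrightarrow> c \<in> S \<Longrightarrow> fls_shift k (fls_const c) \<in> laurent_semidomain S"
  unfolding laurent_semidomain_def
  by (auto simp: fls_shift_const_nth semidomain_zero intro: finite_subset[of _ "{-k}"])

lemma semidomain_laurent_semidomain:
  assumes S: "semidomain S"
  shows "semidomain (laurent_semidomain S)"
proof -
  have "f + g \<in> laurent_semidomain S \<and> f * g \<in> laurent_semidomain S"
    if f: "f \<in> laurent_semidomain S" and g: "g \<in> laurent_semidomain S" for f g
  proof -
    have fin: "finite {n. f $$ n \<noteq> 0}" "finite {n. g $$ n \<noteq> 0}"
      using f g unfolding laurent_semidomain_def by auto
    have "finite {n. (f + g) $$ n \<noteq> 0}"
      by (rule finite_subset[of _ "{n. f $$ n \<noteq> 0} \<union> {n. g $$ n \<noteq> 0}"]) (use fin in auto)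
    moreover have "finite {n. (f * g) $$ n \<noteq> 0}"
      using fin by (rule fls_finite_support_mult)
    moreover have "(f + g) $$ n \<in> S" "(f * g) $$ n \<in> S" for n
      using f g semidomain_add[OF S] semidomain_mult[OF S] unfolding laurent_semidomain_def
      by (auto simp: fls_times_nth(2) intro!: semidomain_sum[OF S])
    ultimately show ?thesis
      unfolding laurent_semidomain_def by blast
  qed
  moreover have "0 \<in> laurent_semidomain S"
    using S unfolding laurent_semidomain_def by (simp add: semidomain_zero)
  moreover have "1 \<in> laurent_semidomain S"
    using fls_shift_const_in_laurent_semidomain[OF S semidomain_one[OF S], of 0] by simp
  ultimately show ?thesis
    unfolding semidomain_def by blast
qed

lemma sunit_laurent_semidomain_shift_const:
  assumes S: "semidomain S" and "sunit S u"
  shows "sunit (laurent_semidomain S) (fls_shift k (fls_const u))"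
proof -
  obtain v where "u \<in> S" "v \<in> S" "v \<noteq> 0" "u \<noteq> 0" "u * v = 1"
    using \<open>sunit S u\<close> unfolding sunit_def by auto
  moreover have "fls_shift m (fls_const c) \<noteq> 0" if "c \<noteq> 0" for m c
    using that fls_nonzeroI[of "fls_shift m (fls_const c)" "- m"] by (simp add: fls_shift_const_nth)
  moreover have "fls_shift k (fls_const u) * fls_shift (- k) (fls_const v) = 1"
    using \<open>u * v = 1\<close> by (simp add: fls_times_both_shifted_simp)
  ultimately show ?thesis
    using fls_shift_const_in_laurent_semidomain[OF S] unfolding sunit_def by blast
qed

lemma sunit_laurent_semidomain_constD:
  assumes S: "semidomain S" and "c \<in> S" "sunit (laurent_semidomain S) (fls_const c)"
  shows "sunit S c"
proof -
  obtain g where g: "g \<in> laurent_semidomain S" "fls_const c * g = 1"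
    using assms(3) unfolding sunit_def by auto
  then have "(fls_const c * g) $$ 0 = 1"
    by simp
  then have "c * g $$ 0 = 1"
    by simp
  moreover have "g $$ 0 \<in> S"
    using g(1) unfolding laurent_semidomain_def by auto
  ultimately show ?thesis
    using \<open>c \<in> S\<close> unfolding sunit_def by (auto intro!: bexI[of _ "g $$ 0"])
qed

text \<open>The base polynomial \<open>x\<^sup>-\<^sup>k f\<close> of a Laurent polynomial \<open>f\<close> of order \<open>k\<close>; for \<open>f\<close> of infinite
  support no such polynomial exists and the value is unspecified.\<close>
definition fls_base_poly :: "'a::zero fls \<Rightarrow> 'a poly" where
  "fls_base_poly f = (THE p. fps_of_poly p = fls_base_factor_to_fps f)"

lemma fps_of_poly_fls_base_poly:
  fixes f :: "'a::zero fls"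
  assumes "finite {n. f $$ n \<noteq> 0}"
  shows "fps_of_poly (fls_base_poly f) = fls_base_factor_to_fps f"
proof -
  obtain A where A: "\<forall>n>A. f $$ n = 0"
    using assms fls_finite_support_iff_bounded by blast
  define N where "N = nat (A - fls_subdegree f + 1)"
  have "fls_base_factor_to_fps f $ i = 0" if "N \<le> i" for i
    using A that unfolding N_def by (simp add: fls_base_factor_to_fps_nth)
  then have "fps_of_poly (truncate_fps N (fls_base_factor_to_fps f)) = fls_base_factor_to_fps f"
    by (intro fps_ext) (simp add: not_less)
  then have "\<exists>!p. fps_of_poly p = fls_base_factor_to_fps f"
    using fps_of_poly_eq_iff by metis
  then show ?thesis
    unfolding fls_base_poly_def by (rule theI')
qed

lemma coeff_fls_base_poly:
  "finite {n. f $$ n \<noteq> 0} \<Longrightarrow> coeff (fls_base_poly f) i = f $$ (fls_subdegree f + int i)"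
  by (metis fps_of_poly_nth fps_of_poly_fls_base_poly fls_base_factor_to_fps_nth)

lemma fls_base_poly_one: "fls_base_poly (1 :: 'a::comm_semiring_1 fls) = 1"
proof -
  have "finite {n. (1::'a fls) $$ n \<noteq> 0}"
    by (rule finite_subset[of _ "{0}"]) auto
  then show ?thesis
    using fps_of_poly_fls_base_poly fls_base_factor_to_fps_one fps_of_poly_1 fps_of_poly_eq_iff by metis
qed

lemma fls_base_poly_mult:
  fixes f g :: "'a::idom fls"
  assumes "finite {n. f $$ n \<noteq> 0}" "finite {n. g $$ n \<noteq> 0}"
  shows "fls_base_poly (f * g) = fls_base_poly f * fls_base_poly g"
proof -
  have "fps_of_poly (fls_base_poly (f * g)) = fls_base_factor_to_fps f * fls_base_factor_to_fps g"
    using fps_of_poly_fls_base_poly[OF fls_finite_support_mult[OF assms]] fls_base_factor_to_fps_mult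
    by metis
  then show ?thesis
    using assms by (simp add: fps_of_poly_fls_base_poly fps_of_poly_mult flip: fps_of_poly_eq_iff)
qed

lemma fls_base_poly_nonzero:
  "finite {n. f $$ n \<noteq> 0} \<Longrightarrow> f \<noteq> 0 \<Longrightarrow> fls_base_poly f \<noteq> 0"
  using fps_of_poly_fls_base_poly fls_base_factor_to_fps_nonzero by fastforce

lemma fls_base_poly_in_poly_semidomain:
  "f \<in> laurent_semidomain S \<Longrightarrow> fls_base_poly f \<in> poly_semidomain S"
  unfolding laurent_semidomain_def poly_semidomain_def by (simp add: coeff_fls_base_poly)

lemma sunit_laurent_semidomain_if_sunit_base_poly:
  assumes S: "semidomain S" and g: "g \<in> laurent_semidomain S"
    and unit: "sunit (poly_semidomain S) (fls_base_poly g)"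
  shows "sunit (laurent_semidomain S) g"
proof -
  have fin: "finite {n. g $$ n \<noteq> 0}"
    using g unfolding laurent_semidomain_def by simp
  obtain u where u: "fls_base_poly g = [:u:]" "sunit S u"
    using unit sunit_poly_semidomain_iff[OF S fls_base_poly_in_poly_semidomain[OF g]] degree_0_id
    by metis
  then have "fls_base_factor_to_fps g = fps_const u"
    using fps_of_poly_fls_base_poly[OF fin] by (simp add: fps_of_poly_const)
  then have "g = fls_shift (- fls_subdegree g) (fls_const u)"
    using fls_conv_base_factor_to_fps_shift_subdegree[of g] by simp
  then show ?thesis
    using sunit_laurent_semidomain_shift_const[OF S u(2)] by metis
qed

lemma nonunit_factors_bounded_laurent_semidomain:
  assumes S: "semidomain S" and bounded: "nonunit_factors_bounded (poly_semidomain S)"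
  shows "nonunit_factors_bounded (laurent_semidomain S)"
proof (rule nonunit_factors_bounded_pullback[where \<phi> = fls_base_poly,
      OF semidomain_laurent_semidomain[OF S] bounded])
  fix f g assume "f \<in> laurent_semidomain S" "g \<in> laurent_semidomain S"
  then show "fls_base_poly (f * g) = fls_base_poly f * fls_base_poly g"
    unfolding laurent_semidomain_def by (simp add: fls_base_poly_mult)
  show "fls_base_poly f \<noteq> 0" if "f \<in> laurent_semidomain S" "f \<noteq> 0" for f
    using that fls_base_poly_nonzero unfolding laurent_semidomain_def by blast
qed (simp_all add: fls_base_poly_in_poly_semidomain fls_base_poly_one
    sunit_laurent_semidomain_if_sunit_base_poly[OF S])

lemma BFS_iff_BFS_laurent_semidomain:
  assumes S: "semidomain S"
  shows "BFS S \<longleftrightarrow> BFS (laurent_semidomain S)"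
proof -
  have "nonunit_factors_bounded S" if "nonunit_factors_bounded (laurent_semidomain S)"
  proof (rule nonunit_factors_bounded_pullback[where \<phi> = fls_const, OF S that])
    show "fls_const c \<in> laurent_semidomain S" if "c \<in> S" for c
      using fls_shift_const_in_laurent_semidomain[OF S that, of 0] by simp
  qed (auto simp: sunit_laurent_semidomain_constD[OF S])
  then show ?thesis
    using BFS_iff_nonunit_factors_bounded[OF S] BFS_iff_BFS_poly_semidomain[OF S]
      BFS_iff_nonunit_factors_bounded[OF semidomain_poly_semidomain[OF S]]
      BFS_iff_nonunit_factors_bounded[OF semidomain_laurent_semidomain[OF S]]
      nonunit_factors_bounded_laurent_semidomain[OF S] by blast
qed

theorem theorem4p3:
  fixes S :: "'a::idom set"
  assumes "semidomain S"
  shows "(BFS S \<longleftrightarrow> BFS (poly_semidomain S)) \<and> (BFS S \<longleftrightarrow> BFS (laurent_semidomain S))"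
  using BFS_iff_BFS_poly_semidomain[OF assms] BFS_iff_BFS_laurent_semidomain[OF assms] by blast

end
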